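(* Let $J$ and $K$ be subcontinua of the Cantor fan $C=F/{\sim}$ with $v\in K\subseteq J$, and let $r:J\to K$ be a retraction. Suppose there is a retraction $R:H_J\to H_K$ such that $q(R(x))=r(q(x))$ for every $x\in H_J$. Then $r$ is semi-simple, i.e. for every leg $A\in\mathcal L(J)$ there is a leg $B\in\mathcal L(J)$ with $r(A)\subseteq B$.
   Context: Let $Y$ be a Cantor set, $F=Y\times[0,1]$, and let $\sim$ be the equivalence relation on $F$ given by $(x,t)\sim(y,s)$ iff $(x,t)=(y,s)$ or $s=t=0$. Let $C=F/{\sim}$ (a Cantor fan), $q:F\to C$ the quotient map, and $v=q(Y\times\{0\})$ the top of $C$. For a subcontinuum $K$ of $C$ put $H_K=\mathrm{Cl}_F(q^{-1}(K\setminus\{v\}))$ (a fence of $K$); note $H_K\subseteq H_J$ when $K\subseteq J$. For a subcontinuum $J$ of $C$ containing $v$ (which is a fan), an end point of $J$ is a point that is an end point of every arc in $J$ containing it; a leg of $J$ is an arc from $v$ to an end point $e\neq v$ of $J$; $\mathcal L(J)$ denotes the set of legs. A retraction from $X$ onto a subspace $Z$ is a continuous map $r:X\to Z$ with $r(z)=z$ for all $z\in Z$. *)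

theory Defs
  imports "HOL-Analysis.Analysis"
begin

definition cantor_ternary :: "real set" where
  "cantor_ternary = {x. \<exists>d::nat \<Rightarrow> nat. (\<forall>n. d n \<in> {0,2}) \<and>
       (\<lambda>n. real (d n) / 3 ^ (Suc n)) sums x}"

definition arc_in :: "'c topology \<Rightarrow> 'c set \<Rightarrow> 'c \<Rightarrow> 'c \<Rightarrow> bool" where
  "arc_in X A a b \<longleftrightarrow> A \<subseteq> topspace X \<and>
     (\<exists>g. homeomorphic_map (top_of_set {0..1::real}) (subtopology X A) g \<and> g 0 = a \<and> g 1 = b)"

definition end_point_of :: "'c topology \<Rightarrow> 'c set \<Rightarrow> 'c \<Rightarrow> bool" where
  "end_point_of X J e \<longleftrightarrow> e \<in> J \<and>
     (\<forall>A a b. A \<subseteq> J \<and> arc_in X A a b \<and> e \<in> A \<longrightarrow> e = a \<or> e = b)"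

definition legs :: "'c topology \<Rightarrow> 'c \<Rightarrow> 'c set \<Rightarrow> 'c set set" where
  "legs X v J = {A. A \<subseteq> J \<and> (\<exists>e. e \<noteq> v \<and> end_point_of X J e \<and> arc_in X A v e)}"

definition subcontinuum :: "'c topology \<Rightarrow> 'c set \<Rightarrow> bool" where
  "subcontinuum X K \<longleftrightarrow> K \<noteq> {} \<and> compactin X K \<and> connectedin X K"

definition retraction_onto :: "'c topology \<Rightarrow> 'c set \<Rightarrow> 'c set \<Rightarrow> ('c \<Rightarrow> 'c) \<Rightarrow> bool" where
  "retraction_onto X J K r \<longleftrightarrow> K \<subseteq> J \<and>
     continuous_map (subtopology X J) (subtopology X K) r \<and> (\<forall>z\<in>topspace X \<inter> K. r z = z)"

definition fence :: "'f topology \<Rightarrow> ('f \<Rightarrow> 'c) \<Rightarrow> 'c \<Rightarrow> 'c set \<Rightarrow> 'f set" where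
  "fence F q v K = F closure_of {x \<in> topspace F. q x \<in> K - {v}}"

definition semi_simple :: "'c topology \<Rightarrow> 'c \<Rightarrow> 'c set \<Rightarrow> ('c \<Rightarrow> 'c) \<Rightarrow> bool" where
  "semi_simple X v J r \<longleftrightarrow> (\<forall>A\<in>legs X v J. \<exists>B\<in>legs X v J. r ` A \<subseteq> B)"

end

theory Submission
  imports Defs
begin

text \<open>A leg \<open>A\<close> of \<open>J\<close> leaves the top \<open>v\<close> along a single spoke, so \<open>A - {v}\<close> lifts
  continuously into the fence of \<open>J\<close> by \<open>c \<mapsto> (y, height c)\<close>. Since the Cantor set is
  totally disconnected, \<open>R\<close> maps this connected lift into one fibre \<open>{y'} \<times> [0,1]\<close>, and
  as \<open>q \<circ> R = r \<circ> q\<close> on the fence, \<open>r(A)\<close> lies in the intersection of \<open>J\<close> with the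
  spoke of \<open>y'\<close>. Because \<open>J\<close> is a continuum and the Cantor set has a basis of clopen sets,
  that intersection is an initial segment \<open>q({y'} \<times> [0,m])\<close> of the spoke: either \<open>{v} \<subseteq> A\<close>,
  or an arc from \<open>v\<close> whose far end is an end point of \<open>J\<close> by maximality of \<open>m\<close>, that is,
  a leg of \<open>J\<close>.\<close>

section \<open>The middle-thirds Cantor set\<close>

lemma cantor_ternary_subset_unit: "cantor_ternary \<subseteq> {0..1}"
proof
  fix x assume "x \<in> cantor_ternary"
  then obtain d where d: "\<forall>n. d n \<in> {0,2}" "(\<lambda>n. real (d n) / 3 ^ Suc n) sums x"
    unfolding cantor_ternary_def by blast
  have "(\<lambda>n. (2/3) * (1/3) ^ n :: real) sums ((2/3) * (1 / (1 - 1/3)))"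
    by (intro sums_mult geometric_sums) auto
  then have ones: "(\<lambda>n. 2 / 3 ^ Suc n :: real) sums 1"
    by (simp add: power_divide field_simps)
  have "x \<le> 1"
  proof (rule sums_le[OF _ d(2) ones])
    fix n
    have "real (d n) \<le> 2" using d(1)[rule_format, of n] by auto
    then show "real (d n) / 3 ^ Suc n \<le> 2 / 3 ^ Suc n" by (simp add: divide_right_mono)
  qed
  moreover have "0 \<le> x"
    by (rule sums_le[OF _ sums_zero d(2)]) auto
  ultimately show "x \<in> {0..1}" by simp
qed

lemma zero_in_cantor_ternary: "0 \<in> cantor_ternary"
  unfolding cantor_ternary_def by (intro CollectI exI[of _ "\<lambda>_. 0"]) auto

text \<open>Dropping the first ternary digit.\<close>
lemma cantor_ternary_triple:
  assumes "x \<in> cantor_ternary"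
  shows "3 * x \<in> cantor_ternary \<or> 3 * x - 2 \<in> cantor_ternary"
proof -
  obtain d where d: "\<forall>n. d n \<in> {0,2}" "(\<lambda>n. real (d n) / 3 ^ Suc n) sums x"
    using assms unfolding cantor_ternary_def by blast
  have "(\<lambda>n. real (d (Suc n)) / 3 ^ Suc (Suc n)) sums (x - real (d 0) / 3)"
    using d(2) sums_Suc_iff[of "\<lambda>n. real (d n) / 3 ^ Suc n" "x - real (d 0) / 3"] by simp
  from sums_mult[OF this, of 3]
  have "(\<lambda>n. real (d (Suc n)) / 3 ^ Suc n) sums (3 * x - real (d 0))"
    by (simp add: algebra_simps)
  then have "3 * x - real (d 0) \<in> cantor_ternary"
    unfolding cantor_ternary_def using d(1) by (intro CollectI exI[of _ "\<lambda>n. d (Suc n)"]) auto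
  moreover have "d 0 = 0 \<or> d 0 = 2" using d(1) by blast
  ultimately show ?thesis by auto
qed

lemma cantor_ternary_triple_left:
  "x \<in> cantor_ternary \<Longrightarrow> x \<le> 1/3 \<Longrightarrow> 3 * x \<in> cantor_ternary"
  using cantor_ternary_triple[of x] cantor_ternary_subset_unit by force

lemma cantor_ternary_triple_right:
  "x \<in> cantor_ternary \<Longrightarrow> 2/3 \<le> x \<Longrightarrow> 3 * x - 2 \<in> cantor_ternary"
  using cantor_ternary_triple[of x] cantor_ternary_subset_unit by force

lemma cantor_ternary_gap: "x \<in> cantor_ternary \<Longrightarrow> x \<le> 1/3 \<or> 2/3 \<le> x"
  using cantor_ternary_triple[of x] cantor_ternary_subset_unit by force

lemma cantor_ternary_interval_triple:
  assumes "{c..c + l} \<subseteq> cantor_ternary" "0 < l"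
  shows "\<exists>c'. {c'..c' + 3 * l} \<subseteq> cantor_ternary"
proof -
  have c: "c \<in> cantor_ternary" and cl: "c + l \<in> cantor_ternary"
    using assms by auto
  have "1/2 \<notin> {c..c + l}"
  proof
    assume "1/2 \<in> {c..c + l}"
    with assms(1) have "1/2 \<in> cantor_ternary" by blast
    then show False using cantor_ternary_gap[of "1/2"] by simp
  qed
  then consider "c + l \<le> 1/3" | "2/3 \<le> c"
    using cantor_ternary_gap[OF c] cantor_ternary_gap[OF cl] by force
  then show ?thesis
  proof cases
    case 1
    have "{3 * c..3 * c + 3 * l} \<subseteq> cantor_ternary"
    proof
      fix z assume "z \<in> {3 * c..3 * c + 3 * l}"
      then have "z / 3 \<in> cantor_ternary" "z / 3 \<le> 1/3"
        using 1 assms(1) by auto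
      from cantor_ternary_triple_left[OF this] show "z \<in> cantor_ternary" by simp
    qed
    then show ?thesis by blast
  next
    case 2
    have "{3 * c - 2..3 * c - 2 + 3 * l} \<subseteq> cantor_ternary"
    proof
      fix z assume "z \<in> {3 * c - 2..3 * c - 2 + 3 * l}"
      then have "(z + 2) / 3 \<in> cantor_ternary" "2/3 \<le> (z + 2) / 3"
        using 2 assms(1) by auto
      from cantor_ternary_triple_right[OF this] show "z \<in> cantor_ternary" by (simp add: field_simps)
    qed
    then show ?thesis by blast
  qed
qed

lemma cantor_ternary_no_interval:
  assumes "0 < l" shows "\<not> {c..c + l} \<subseteq> cantor_ternary"
proof
  assume "{c..c + l} \<subseteq> cantor_ternary"
  then have long: "\<exists>c'. {c'..c' + 3 ^ n * l} \<subseteq> cantor_ternary" for n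
  proof (induction n)
    case (Suc n)
    then show ?case
      using cantor_ternary_interval_triple[of _ "3 ^ n * l"] \<open>0 < l\<close> by (auto simp: mult.assoc)
  qed force
  obtain n where "1 / l < 3 ^ n" using real_arch_pow[of 3 "1 / l"] by auto
  then have "1 < 3 ^ n * l" using \<open>0 < l\<close> by (simp add: field_simps)
  moreover obtain c' where c': "{c'..c' + 3 ^ n * l} \<subseteq> cantor_ternary" using long by blast
  moreover have "c' \<in> {c'..c' + 3 ^ n * l}" "c' + 3 ^ n * l \<in> {c'..c' + 3 ^ n * l}"
    using \<open>0 < l\<close> by auto
  ultimately have "c' \<in> {0..1}" "c' + 3 ^ n * l \<in> {0..1}"
    using cantor_ternary_subset_unit by blast+
  with \<open>1 < 3 ^ n * l\<close> show False by simp
qed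

lemma interior_cantor_ternary: "interior cantor_ternary = {}"
proof (rule ccontr)
  assume "interior cantor_ternary \<noteq> {}"
  then obtain x e where "0 < e" "ball x e \<subseteq> cantor_ternary"
    by (metis all_not_in_conv open_contains_ball open_interior interior_subset subset_trans)
  then have "{x..x + e/2} \<subseteq> cantor_ternary"
    by (auto simp: dist_real_def subset_iff)
  with cantor_ternary_no_interval[of "e/2" x] \<open>0 < e\<close> show False by simp
qed

section \<open>Zero-dimensional spaces, arcs and retractions\<close>

lemma dimension_le_0_clopen_neighbourhood:
  assumes "X dim_le 0" "openin X U" "x \<in> U"
  obtains W where "closedin X W" "openin X W" "x \<in> W" "W \<subseteq> U"
  using assms open_neighbourhood_base_of[of "\<lambda>W. closedin X W \<and> openin X W" X]
  unfolding dimension_le_0_neighbourhood_base_of_clopen by blast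

lemma dimension_le_0_empty_interior:
  fixes S :: "real set"
  assumes "interior S = {}"
  shows "top_of_set S dim_le 0"
proof -
  have outside: "\<exists>z\<in>{a<..<b}. z \<notin> S" if "a < b" for a b
  proof -
    have "\<not> {a<..<b} \<subseteq> interior S" using that assms by auto
    then show ?thesis using interior_maximal[of "{a<..<b}" S] by auto
  qed
  have "\<exists>W. (closedin (top_of_set S) W \<and> openin (top_of_set S) W) \<and> x \<in> W \<and> W \<subseteq> U"
    if "openin (top_of_set S) U" "x \<in> U" for U x
  proof -
    obtain T where T: "open T" "U = S \<inter> T" using \<open>openin (top_of_set S) U\<close> by (auto simp: openin_open)
    then obtain e where "0 < e" "ball x e \<subseteq> T" using \<open>x \<in> U\<close> open_contains_ball by blast
    obtain a b where ab: "a \<in> {x - e<..<x}" "a \<notin> S" "b \<in> {x<..<x + e}" "b \<notin> S"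
      using outside[of "x - e" x] outside[of x "x + e"] \<open>0 < e\<close> by auto
    have "S \<inter> {a<..<b} = S \<inter> {a..b}" using ab by (auto simp: le_less)
    then have "closedin (top_of_set S) (S \<inter> {a<..<b})"
      by (metis closedin_closed_Int closed_atLeastAtMost)
    moreover have "openin (top_of_set S) (S \<inter> {a<..<b})"
      by (simp add: openin_open_Int)
    moreover have "S \<inter> {a<..<b} \<subseteq> U"
      using ab \<open>ball x e \<subseteq> T\<close> T(2) by (auto simp: subset_iff dist_real_def)
    moreover have "x \<in> S \<inter> {a<..<b}" using ab \<open>x \<in> U\<close> T(2) by auto
    ultimately show ?thesis by blast
  qed
  then show ?thesis
    unfolding dimension_le_0_neighbourhood_base_of_clopen
    by (subst open_neighbourhood_base_of) blast+
qed

lemma connectedin_dimension_le_0_eq: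
  assumes "t1_space X" "X dim_le 0" "connectedin X S" "x \<in> S" "x' \<in> S"
  shows "x = x'"
proof (rule ccontr)
  assume "x \<noteq> x'"
  moreover have "x \<in> topspace X" "x' \<in> topspace X"
    using assms(3-5) connectedin_subset_topspace by blast+
  ultimately obtain U where "openin X U" "x \<in> U" "x' \<notin> U"
    using \<open>t1_space X\<close> unfolding t1_space_def by blast
  then obtain W where W: "closedin X W" "openin X W" "x \<in> W" "W \<subseteq> U"
    using dimension_le_0_clopen_neighbourhood[OF \<open>X dim_le 0\<close>] by blast
  then have "S \<subseteq> W \<or> disjnt S W"
    using connectedin_clopen_cases \<open>connectedin X S\<close> by blast
  then show False using W \<open>x \<in> S\<close> \<open>x' \<in> S\<close> \<open>x' \<notin> U\<close> by (auto simp: disjnt_iff)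
qed

lemma Hausdorff_space_punctured:
  assumes "openin X (topspace X - {v})" "Hausdorff_space (subtopology X (topspace X - {v}))"
    and f: "continuous_map X euclideanreal f" "\<And>x. x \<in> topspace X \<Longrightarrow> f x = f v \<Longrightarrow> x = v"
  shows "Hausdorff_space X"
  unfolding Hausdorff_space_def
proof clarify
  fix x y assume xy: "x \<in> topspace X" "y \<in> topspace X" "x \<noteq> y"
  show "\<exists>U V. openin X U \<and> openin X V \<and> x \<in> U \<and> y \<in> V \<and> disjnt U V"
  proof (cases "f x = f y")
    case True
    then have "x \<in> topspace X - {v}" "y \<in> topspace X - {v}"
      using xy f(2)[of x] f(2)[of y] by auto
    then obtain U V where "openin (subtopology X (topspace X - {v})) U"
        "openin (subtopology X (topspace X - {v})) V" "x \<in> U" "y \<in> V" "disjnt U V"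
      using assms(2)[unfolded Hausdorff_space_def, rule_format, of x y] xy(3) by auto
    then show ?thesis using openin_trans_full[OF _ assms(1)] by blast
  next
    case False
    obtain U V where UV: "open U" "open V" "f x \<in> U" "f y \<in> V" "U \<inter> V = {}"
      using separation_t2[THEN iffD1, OF False] by blast
    let ?U = "{z \<in> topspace X. f z \<in> U}" and ?V = "{z \<in> topspace X. f z \<in> V}"
    have "openin X ?U" "openin X ?V"
      using openin_continuous_map_preimage[OF f(1)] UV by simp_all
    moreover have "x \<in> ?U" "y \<in> ?V" "disjnt ?U ?V"
      using xy UV by (auto simp: disjnt_def)
    ultimately show ?thesis by blast
  qed
qed

lemma arc_inE:
  assumes "arc_in X A a b"
  obtains g where "continuous_map (top_of_set {0..1::real}) X g" "inj_on g {0..1}"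
    "g ` {0..1} = A" "g 0 = a" "g 1 = b"
proof -
  obtain g where A: "A \<subseteq> topspace X" and g: "homeomorphic_map (top_of_set {0..1::real}) (subtopology X A) g"
    "g 0 = a" "g 1 = b"
    using assms unfolding arc_in_def by blast
  show ?thesis
  proof
    show "continuous_map (top_of_set {0..1}) X g"
      using homeomorphic_imp_continuous_map[OF g(1)] continuous_map_into_fulltopology by blast
    show "inj_on g {0..1}" using homeomorphic_imp_injective_map[OF g(1)] by simp
    show "g ` {0..1} = A" using homeomorphic_imp_surjective_map[OF g(1)] A by auto
  qed (use g in auto)
qed

lemma connectedin_arc_minus_start:
  assumes "arc_in X A a b" shows "connectedin X (A - {a})"
proof -
  obtain g where g: "continuous_map (top_of_set {0..1::real}) X g" "inj_on g {0..1}"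
    "g ` {0..1} = A" "g 0 = a"
    by (rule arc_inE[OF assms]) blast
  have "A - {a} = g ` ({0..1} - {0})"
    using g(2-4) by (simp add: inj_on_image_set_diff)
  also have "{0..1} - {0} = {0<..1::real}" by auto
  finally have "A - {a} = g ` {0<..1}" .
  moreover have "continuous_map (top_of_set {0<..1}) X g"
    by (rule continuous_map_from_subtopology_mono[OF g(1)]) auto
  moreover have "connectedin (top_of_set {0<..1}) {0<..1::real}"
    by (simp add: connectedin_subtopology)
  ultimately show ?thesis
    using connectedin_continuous_map_image by metis
qed

lemma arc_in_start_mem: "arc_in X A a b \<Longrightarrow> a \<in> A"
  by (metis arc_inE atLeastAtMost_iff image_eqI order_refl zero_le_one)

lemma retraction_onto_image_subset:
  "retraction_onto X J K r \<Longrightarrow> J \<subseteq> topspace X \<Longrightarrow> r ` J \<subseteq> K"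
  unfolding retraction_onto_def
  by (fastforce dest: continuous_map_image_subset_topspace)

lemma retraction_onto_fixes:
  "retraction_onto X J K r \<Longrightarrow> c \<in> topspace X \<Longrightarrow> c \<in> K \<Longrightarrow> r c = c"
  unfolding retraction_onto_def by blast

lemma continuous_inj_on_interior_not_max:
  fixes f :: "real \<Rightarrow> real"
  assumes "continuous_on {a..b} f" "inj_on f {a..b}" "a < t" "t < b"
  shows "\<exists>s\<in>{a..b}. f t < f s"
proof -
  have ab: "a \<in> {a..b}" "t \<in> {a..b}" "b \<in> {a..b}" using assms(3,4) by auto
  have "strict_mono_on {a..b} f \<or> strict_antimono_on {a..b} f"
    using injective_eq_monotone_map[of "{a..b}" f] assms(1,2) by simp
  then show ?thesis
  proof
    assume "strict_mono_on {a..b} f"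
    from monotone_onD[OF this ab(2,3) \<open>t < b\<close>] show ?thesis using ab(3) by blast
  next
    assume "strict_antimono_on {a..b} f"
    from monotone_onD[OF this ab(1,2) \<open>a < t\<close>] show ?thesis using ab(1) by blast
  qed
qed

lemma continuous_map_interval_neighbourhood:
  assumes h: "continuous_map (top_of_set {0..1::real}) X h" and "openin X U"
    and t0: "t0 \<in> {0<..<1}" and "h t0 \<in> U"
  obtains d where "0 < d" "{t0 - d..t0 + d} \<subseteq> {0..1}" "h ` {t0 - d..t0 + d} \<subseteq> U"
proof -
  have "openin (top_of_set {0..1}) {t \<in> {0..1}. h t \<in> U}"
    using openin_continuous_map_preimage[OF h \<open>openin X U\<close>] by simp
  moreover have "t0 \<in> {t \<in> {0..1}. h t \<in> U}" using t0 \<open>h t0 \<in> U\<close> by simp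
  ultimately obtain e where "0 < e" and e: "\<And>t. t \<in> {0..1} \<Longrightarrow> dist t t0 < e \<Longrightarrow> h t \<in> U"
    unfolding openin_euclidean_subtopology_iff by blast
  define d where "d = min (e/2) (min (t0/2) ((1 - t0)/2))"
  have d: "0 < d" "d < e" "d \<le> t0/2" "d \<le> (1 - t0)/2"
    using \<open>0 < e\<close> t0 unfolding d_def by (auto simp: min_def)
  then have I: "{t0 - d..t0 + d} \<subseteq> {0..1}" by auto
  have "h t \<in> U" if "t \<in> {t0 - d..t0 + d}" for t
  proof -
    have "dist t t0 < e" using that d by (auto simp: dist_real_def)
    then show ?thesis using e I that by blast
  qed
  then show ?thesis using that[OF d(1) I] by blast
qed

lemma subset_fence: "{x \<in> topspace F. q x \<in> K - {v}} \<subseteq> fence F q v K"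
  unfolding fence_def by (rule closure_of_subset) auto

section \<open>Fans over zero-dimensional spaces\<close>

text \<open>The Cantor fan is the instance where \<open>Y\<close> is a Cantor set; only that \<open>Y\<close> is a nonempty
  zero-dimensional Hausdorff space is used.\<close>

locale zero_dimensional_fan =
  fixes Y :: "'a topology" and Ctop :: "'c topology"
    and q :: "'a \<times> real \<Rightarrow> 'c" and v :: 'c
  assumes Hausdorff_Y: "Hausdorff_space Y"
    and dim_Y: "Y dim_le 0"
    and nonempty_Y: "topspace Y \<noteq> {}"
    and quotient_q: "quotient_map (prod_topology Y (top_of_set {0..1})) Ctop q"
    and q_eq_iff: "\<And>x x'. x \<in> topspace Y \<times> {0..1} \<Longrightarrow> x' \<in> topspace Y \<times> {0..1} \<Longrightarrow>
                      q x = q x' \<longleftrightarrow> x = x' \<or> snd x = 0 \<and> snd x' = 0"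
    and v_eq: "\<And>y. y \<in> topspace Y \<Longrightarrow> v = q (y, 0)"
begin

abbreviation F :: "('a \<times> real) topology" where
  "F \<equiv> prod_topology Y (top_of_set {0..1})"

lemma continuous_q: "continuous_map F Ctop q"
  using quotient_q quotient_imp_continuous_map by blast

lemma q_image: "q ` (topspace Y \<times> {0..1}) = topspace Ctop"
  using quotient_imp_surjective_map[OF quotient_q] by simp

lemma q_eq_v_iff: "y \<in> topspace Y \<Longrightarrow> s \<in> {0..1} \<Longrightarrow> q (y, s) = v \<longleftrightarrow> s = 0"
  using q_eq_iff[of "(y, s)" "(y, 0)"] v_eq[of y] by auto

lemma q_eq_positive_iff:
  "y \<in> topspace Y \<Longrightarrow> y' \<in> topspace Y \<Longrightarrow> s \<in> {0<..1} \<Longrightarrow> s' \<in> {0..1} \<Longrightarrow>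
    q (y, s) = q (y', s') \<longleftrightarrow> y = y' \<and> s = s'"
  using q_eq_iff[of "(y, s)" "(y', s')"] by auto

lemma v_in_topspace: "v \<in> topspace Ctop"
  using nonempty_Y v_eq q_image by fastforce

lemma connectedin_F_in_fibre:
  assumes "connectedin F L" shows "\<exists>y\<in>topspace Y. L \<subseteq> {y} \<times> {0..1}"
proof (cases "L = {}")
  case True then show ?thesis using nonempty_Y by blast
next
  case False
  then obtain x0 where "x0 \<in> L" by blast
  have "connectedin Y (fst ` L)"
    using connectedin_continuous_map_image[OF continuous_map_fst assms] .
  then have "fst x = fst x0" if "x \<in> L" for x
    using connectedin_dimension_le_0_eq[OF Hausdorff_imp_t1_space[OF Hausdorff_Y] dim_Y] that \<open>x0 \<in> L\<close>
    by blast
  moreover have L: "L \<subseteq> topspace Y \<times> {0..1}"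
    using connectedin_subset_topspace[OF assms] by simp
  ultimately have "L \<subseteq> {fst x0} \<times> {0..1}"
    by (force simp: mem_Times_iff)
  moreover have "fst x0 \<in> topspace Y"
    using L \<open>x0 \<in> L\<close> by (force simp: mem_Times_iff)
  ultimately show ?thesis by blast
qed

text \<open>All preimages of a point under \<open>q\<close> share their second coordinate, so the choice made
  by \<open>SOME\<close> does not matter.\<close>
definition height :: "'c \<Rightarrow> real" where
  "height c = snd (SOME x. x \<in> topspace Y \<times> {0..1} \<and> q x = c)"

lemma height_q [simp]: "y \<in> topspace Y \<Longrightarrow> s \<in> {0..1} \<Longrightarrow> height (q (y, s)) = s"
proof -
  assume ys: "y \<in> topspace Y" "s \<in> {0..1}"
  define x where "x = (SOME x. x \<in> topspace Y \<times> {0..1} \<and> q x = q (y, s))"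
  have "x \<in> topspace Y \<times> {0..1} \<and> q x = q (y, s)"
    unfolding x_def by (rule someI[of _ "(y, s)"]) (use ys in auto)
  then have "snd x = s" using q_eq_iff[of x "(y, s)"] ys by auto
  then show ?thesis unfolding height_def x_def .
qed

lemma continuous_height: "continuous_map Ctop euclideanreal height"
proof (rule continuous_compose_quotient_map[OF quotient_q])
  have "continuous_map F euclideanreal snd"
    using continuous_map_snd continuous_map_into_fulltopology by blast
  then show "continuous_map F euclideanreal (height \<circ> q)"
    by (rule continuous_map_eq) auto
qed

lemma topspace_CtopE:
  assumes "c \<in> topspace Ctop"
  obtains y s where "y \<in> topspace Y" "s \<in> {0..1}" "c = q (y, s)"
proof -
  have "c \<in> q ` (topspace Y \<times> {0..1})" using assms q_image by simp
  then show ?thesis using that by blast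
qed

lemma height_in_unit: "c \<in> topspace Ctop \<Longrightarrow> height c \<in> {0..1}"
  by (elim topspace_CtopE) simp

lemma height_eq_0_iff: "c \<in> topspace Ctop \<Longrightarrow> height c = 0 \<longleftrightarrow> c = v"
  by (elim topspace_CtopE) (simp add: q_eq_v_iff)

lemma saturated_positive:
  assumes "U \<subseteq> topspace Y \<times> {0<..1}"
  shows "{x \<in> topspace F. q x \<in> q ` U} \<subseteq> U"
proof
  fix x assume "x \<in> {x \<in> topspace F. q x \<in> q ` U}"
  then obtain u where "x \<in> topspace Y \<times> {0..1}" "u \<in> U" "q x = q u" by auto
  moreover have "u \<in> topspace Y \<times> {0..1}" "snd u \<noteq> 0"
    using \<open>u \<in> U\<close> assms by auto
  ultimately show "x \<in> U" using q_eq_iff[of x u] by auto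
qed

lemma openin_q_image_positive:
  "openin F U \<Longrightarrow> U \<subseteq> topspace Y \<times> {0<..1} \<Longrightarrow> openin Ctop (q ` U)"
  using quotient_q saturated_positive unfolding quotient_map_saturated_open by blast

lemma closedin_q_image_positive:
  "closedin F U \<Longrightarrow> U \<subseteq> topspace Y \<times> {0<..1} \<Longrightarrow> closedin Ctop (q ` U)"
  using quotient_q saturated_positive unfolding quotient_map_saturated_closed by blast

lemma q_image_positive: "q ` (topspace Y \<times> {0<..1}) = topspace Ctop - {v}"
proof
  show "q ` (topspace Y \<times> {0<..1}) \<subseteq> topspace Ctop - {v}"
    using q_image q_eq_v_iff by force
  show "topspace Ctop - {v} \<subseteq> q ` (topspace Y \<times> {0<..1})"
  proof
    fix c assume c: "c \<in> topspace Ctop - {v}"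
    then obtain y s where "y \<in> topspace Y" "s \<in> {0..1}" "c = q (y, s)"
      by (auto elim: topspace_CtopE)
    moreover have "s \<noteq> 0" using c calculation q_eq_v_iff by auto
    ultimately show "c \<in> q ` (topspace Y \<times> {0<..1})" by auto
  qed
qed

lemma openin_F_tube: "openin Y W \<Longrightarrow> 0 \<le> a \<Longrightarrow> openin F (W \<times> {a<..1})"
proof -
  assume W: "openin Y W" and "0 \<le> a"
  have "{0..1} \<inter> {a<..} = {a<..1::real}" using \<open>0 \<le> a\<close> by auto
  then have "openin (top_of_set {0..1}) {a<..1::real}"
    by (metis openin_open_Int open_greaterThan)
  then show ?thesis using W by (simp add: openin_prod_Times_iff)
qed

lemma openin_q_tube: "openin Y W \<Longrightarrow> 0 \<le> a \<Longrightarrow> openin Ctop (q ` (W \<times> {a<..1}))"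
  by (rule openin_q_image_positive[OF openin_F_tube]) (auto dest: openin_subset)

lemma closedin_q_tube: "closedin Y W \<Longrightarrow> 0 < a \<Longrightarrow> closedin Ctop (q ` (W \<times> {a..1}))"
proof -
  assume W: "closedin Y W" and "0 < a"
  have "{0..1} \<inter> {a..} = {a..1::real}" using \<open>0 < a\<close> by auto
  then have "closedin (top_of_set {0..1}) {a..1::real}"
    by (metis closedin_closed_Int closed_atLeast)
  then have "closedin F (W \<times> {a..1})" using W by (simp add: closedin_prod_Times_iff)
  moreover have "W \<times> {a..1} \<subseteq> topspace Y \<times> {0<..1}"
    using closedin_subset[OF W] \<open>0 < a\<close> by auto
  ultimately show ?thesis by (rule closedin_q_image_positive)
qed

lemma openin_punctured: "openin Ctop (topspace Ctop - {v})"
  using openin_q_tube[OF openin_topspace, of 0] q_image_positive by simp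

lemma homeomorphic_map_q_positive:
  "homeomorphic_map (subtopology F (topspace Y \<times> {0<..1}))
                    (subtopology Ctop (topspace Ctop - {v})) q"
proof (rule bijective_open_imp_homeomorphic_map)
  have topspace_positive: "topspace (subtopology F (topspace Y \<times> {0<..1})) = topspace Y \<times> {0<..1}"
    by auto
  show "continuous_map (subtopology F (topspace Y \<times> {0<..1}))
                       (subtopology Ctop (topspace Ctop - {v})) q"
    using q_image_positive
    by (auto simp: continuous_map_in_subtopology intro: continuous_map_from_subtopology continuous_q)
  show "open_map (subtopology F (topspace Y \<times> {0<..1})) (subtopology Ctop (topspace Ctop - {v})) q"
    unfolding open_map_def
  proof clarify
    fix U assume "openin (subtopology F (topspace Y \<times> {0<..1})) U"
    then have U: "openin F U" "U \<subseteq> topspace Y \<times> {0<..1}"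
      using openin_trans_full[OF _ openin_F_tube[OF openin_topspace, of 0]] openin_subset by fastforce+
    then have "openin Ctop (q ` U)" "q ` U \<subseteq> topspace Ctop - {v}"
      using openin_q_image_positive image_mono[OF U(2), of q] q_image_positive by auto
    then show "openin (subtopology Ctop (topspace Ctop - {v})) (q ` U)"
      by (metis inf.absorb_iff2 openin_subtopology_Int2)
  qed
  show "q ` topspace (subtopology F (topspace Y \<times> {0<..1})) =
        topspace (subtopology Ctop (topspace Ctop - {v}))"
    using q_image_positive topspace_positive by auto
  show "inj_on q (topspace (subtopology F (topspace Y \<times> {0<..1})))"
    unfolding topspace_positive using q_eq_iff by (auto simp: inj_on_def)
qed

lemma Hausdorff_Ctop: "Hausdorff_space Ctop"
proof (rule Hausdorff_space_punctured[OF openin_punctured _ continuous_height])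
  have "Hausdorff_space (subtopology F (topspace Y \<times> {0<..1}))"
    using Hausdorff_Y by (simp add: Hausdorff_space_prod_topology Hausdorff_space_subtopology)
  then show "Hausdorff_space (subtopology Ctop (topspace Ctop - {v}))"
    using homeomorphic_Hausdorff_space homeomorphic_map_q_positive homeomorphic_space by blast
  show "c = v" if "c \<in> topspace Ctop" "height c = height v" for c
    using that height_eq_0_iff v_in_topspace by metis
qed

lemma connectedin_punctured_in_spoke:
  assumes "connectedin Ctop S" "v \<notin> S"
  shows "\<exists>y\<in>topspace Y. S \<subseteq> q ` ({y} \<times> {0<..1})"
proof -
  obtain g where "homeomorphic_maps (subtopology F (topspace Y \<times> {0<..1}))
                                    (subtopology Ctop (topspace Ctop - {v})) q g"
    using homeomorphic_map_q_positive homeomorphic_map_maps by blast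
  then have g: "continuous_map (subtopology Ctop (topspace Ctop - {v}))
                               (subtopology F (topspace Y \<times> {0<..1})) g"
    and qg: "\<And>c. c \<in> topspace Ctop - {v} \<Longrightarrow> q (g c) = c"
    unfolding homeomorphic_maps_def by auto
  have S: "S \<subseteq> topspace Ctop - {v}"
    using assms connectedin_subset_topspace by blast
  then have "connectedin (subtopology Ctop (topspace Ctop - {v})) S"
    using assms(1) by (simp add: connectedin_subtopology)
  then have "connectedin (subtopology F (topspace Y \<times> {0<..1})) (g ` S)"
    by (rule connectedin_continuous_map_image[OF g])
  then have gS: "connectedin F (g ` S)" "g ` S \<subseteq> topspace Y \<times> {0<..1}"
    by (auto simp: connectedin_subtopology)
  obtain y where "y \<in> topspace Y" "g ` S \<subseteq> {y} \<times> {0..1}"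
    using connectedin_F_in_fibre[OF gS(1)] by blast
  with gS(2) have "g ` S \<subseteq> {y} \<times> {0<..1}" by auto
  moreover have "S \<subseteq> q ` g ` S"
  proof
    fix c assume "c \<in> S"
    then have "c = q (g c)" using qg S by (metis subsetD)
    then show "c \<in> q ` g ` S" using \<open>c \<in> S\<close> by blast
  qed
  ultimately show ?thesis using \<open>y \<in> topspace Y\<close> by blast
qed

lemma continuous_map_spoke:
  "y \<in> topspace Y \<Longrightarrow> continuous_map (top_of_set {0..1}) Ctop (\<lambda>s. q (y, s))"
  using continuous_map_compose[OF _ continuous_q, of "top_of_set {0..1}" "\<lambda>s. (y, s)"]
  by (simp add: continuous_map_pairedI o_def)

lemma closed_avoids_clopen_tube:
  assumes "closedin Ctop J" "y \<in> topspace Y" "u \<in> {0<..1}" "q (y, u) \<notin> J"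
  obtains W e where "closedin Y W" "openin Y W" "y \<in> W" "0 < e" "e \<le> u"
    "\<And>w t. w \<in> W \<Longrightarrow> t \<in> {u - e<..u} \<Longrightarrow> q (w, t) \<notin> J"
proof -
  define N where "N = {x \<in> topspace F. q x \<in> topspace Ctop - J}"
  have "openin F N"
    unfolding N_def using assms(1)
    by (intro openin_continuous_map_preimage[OF continuous_q]) (simp add: closedin_def)
  moreover have "(y, u) \<in> topspace F" using assms(2,3) by simp
  then have "(y, u) \<in> N"
    unfolding N_def using assms(4) continuous_map_image_subset_topspace[OF continuous_q] by blast
  ultimately have "\<exists>U V. openin Y U \<and> openin (top_of_set {0..1}) V \<and> y \<in> U \<and> u \<in> V \<and> U \<times> V \<subseteq> N"
    by (rule openin_prod_topology_alt[THEN iffD1, rule_format])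
  then obtain U V where UV: "openin Y U" "openin (top_of_set {0..1}) V" "y \<in> U" "u \<in> V"
      "U \<times> V \<subseteq> N"
    by auto
  then obtain e0 where "0 < e0" and e0: "\<And>t. t \<in> {0..1} \<Longrightarrow> dist t u < e0 \<Longrightarrow> t \<in> V"
    unfolding openin_euclidean_subtopology_iff by meson
  obtain W where W: "closedin Y W" "openin Y W" "y \<in> W" "W \<subseteq> U"
    using dimension_le_0_clopen_neighbourhood[OF dim_Y UV(1,3)] .
  show ?thesis
  proof (rule that[OF W(1-3), of "min e0 u"])
    show "0 < min e0 u" "min e0 u \<le> u" using \<open>0 < e0\<close> assms(3) by auto
    fix w t assume "w \<in> W" "t \<in> {u - min e0 u<..u}"
    then have "t \<in> V" using e0[of t] assms(3) by (auto simp: dist_real_def)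
    then have "(w, t) \<in> N" using UV(5) W(4) \<open>w \<in> W\<close> by blast
    then show "q (w, t) \<notin> J" unfolding N_def by simp
  qed
qed

lemma clopenin_continuum_tube:
  assumes W: "closedin Y W" "openin Y W" and "0 < e" "e \<le> u"
    and gap: "\<And>w t. w \<in> W \<Longrightarrow> t \<in> {u - e<..u} \<Longrightarrow> q (w, t) \<notin> J"
  shows "closedin (subtopology Ctop J) (J \<inter> q ` (W \<times> {u - e<..1}))"
    and "openin (subtopology Ctop J) (J \<inter> q ` (W \<times> {u - e<..1}))"
proof -
  let ?P = "q ` (W \<times> {u - e<..1})"
  txt \<open>\<open>J\<close> misses the gap, so the open and the closed tube meet it in the same set.\<close>
  have "J \<inter> ?P = J \<inter> q ` (W \<times> {u..1})"
  proof
    show "J \<inter> ?P \<subseteq> J \<inter> q ` (W \<times> {u..1})"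
    proof
      fix c assume "c \<in> J \<inter> ?P"
      then obtain w t where c: "c \<in> J" "c = q (w, t)" "w \<in> W" "u - e < t" "t \<le> 1"
        by auto
      then have "u \<le> t" using gap[of w t] by force
      then show "c \<in> J \<inter> q ` (W \<times> {u..1})" using c by auto
    qed
    show "J \<inter> q ` (W \<times> {u..1}) \<subseteq> J \<inter> ?P"
      using \<open>0 < e\<close> by auto
  qed
  then show "closedin (subtopology Ctop J) (J \<inter> ?P)"
    using closedin_q_tube[OF W(1)] \<open>0 < e\<close> \<open>e \<le> u\<close>
    by (metis closedin_subtopology_Int_closed order_less_le_trans)
  show "openin (subtopology Ctop J) (J \<inter> ?P)"
    using openin_q_tube[OF W(2)] \<open>e \<le> u\<close> by (simp add: openin_subtopology_Int2)
qed

lemma segment_in_continuum: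
  assumes J: "connectedin Ctop J" "closedin Ctop J" "v \<in> J"
    and y: "y \<in> topspace Y" and "m \<le> 1" "q (y, m) \<in> J"
  shows "q ` ({y} \<times> {0..m}) \<subseteq> J"
proof clarify
  fix u assume "u \<in> {0..m}"
  show "q (y, u) \<in> J"
  proof (rule ccontr)
    assume uJ: "q (y, u) \<notin> J"
    then have u: "0 < u" "u < m"
      using \<open>u \<in> {0..m}\<close> \<open>q (y, m) \<in> J\<close> J(3) v_eq[OF y] by (auto simp: less_eq_real_def)
    obtain W e where W: "closedin Y W" "openin Y W" "y \<in> W" "0 < e" "e \<le> u"
      and gap: "\<And>w t. w \<in> W \<Longrightarrow> t \<in> {u - e<..u} \<Longrightarrow> q (w, t) \<notin> J"
      using closed_avoids_clopen_tube[OF J(2) y _ uJ] u \<open>m \<le> 1\<close> by auto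
    let ?P = "q ` (W \<times> {u - e<..1})"
    have "connectedin (subtopology Ctop J) J"
      using J(1) by (simp add: connectedin_subtopology)
    then have "J \<subseteq> J \<inter> ?P \<or> disjnt J (J \<inter> ?P)"
      using connectedin_clopen_cases clopenin_continuum_tube[OF W(1,2,4,5) gap] by blast
    moreover have "q (y, m) \<in> ?P"
      using W(3) u \<open>m \<le> 1\<close> \<open>0 < e\<close> by auto
    moreover have "v \<notin> ?P"
    proof
      assume "v \<in> ?P"
      then obtain w t where "w \<in> W" "t \<in> {u - e<..1}" "v = q (w, t)" by auto
      moreover have "w \<in> topspace Y" using \<open>w \<in> W\<close> openin_subset[OF W(2)] by blast
      ultimately show False using q_eq_v_iff[of w t] \<open>e \<le> u\<close> by auto
    qed
    ultimately show False using J(3) \<open>q (y, m) \<in> J\<close> by (auto simp: disjnt_iff)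
  qed
qed

lemma spoke_height_max:
  assumes "closedin Ctop J" "v \<in> J" "y \<in> topspace Y"
  obtains m where "m \<in> {0..1}" "q (y, m) \<in> J" "\<And>s. s \<in> {0..1} \<Longrightarrow> q (y, s) \<in> J \<Longrightarrow> s \<le> m"
proof -
  define S where "S = {s \<in> {0..1}. q (y, s) \<in> J}"
  have "closedin (top_of_set {0..1}) S"
    unfolding S_def using closedin_continuous_map_preimage[OF continuous_map_spoke[OF assms(3)] assms(1)]
    by simp
  then have "closed S" using closedin_closed_trans by blast
  moreover have "0 \<in> S" unfolding S_def using assms(2) v_eq[OF assms(3)] by simp
  moreover have "bdd_above S" unfolding S_def by (rule bdd_aboveI[of _ 1]) auto
  ultimately have "Sup S \<in> S" using closed_contains_Sup by blast
  moreover have "s \<le> Sup S" if "s \<in> S" for s using cSup_upper[OF that \<open>bdd_above S\<close>] .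
  ultimately show ?thesis using that unfolding S_def by blast
qed

lemma arc_in_spoke_segment:
  assumes "y \<in> topspace Y" "0 < m" "m \<le> 1"
  shows "arc_in Ctop (q ` ({y} \<times> {0..m})) v (q (y, m))"
proof -
  define b where "b t = q (y, m * t)" for t
  have "b ` {0..1} = (\<lambda>s. q (y, s)) ` ((*) m ` {0..1})"
    unfolding b_def by (simp add: image_image)
  also have "\<dots> = q ` ({y} \<times> {0..m})"
    using \<open>0 < m\<close> by auto
  finally have image_b: "b ` {0..1} = q ` ({y} \<times> {0..m})" .
  have m_unit: "continuous_map (top_of_set {0..1}) (top_of_set {0..1}) (\<lambda>t. m * t)"
    using assms by (auto simp: continuous_map_in_subtopology intro!: continuous_intros mult_le_one)
  have "continuous_map (top_of_set {0..1}) Ctop b"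
    using continuous_map_compose[OF m_unit continuous_map_spoke[OF assms(1)]]
    unfolding b_def by (simp add: o_def)
  moreover have "inj_on b {0..1}"
  proof (rule inj_onI)
    fix t t' assume "t \<in> {0..1}" "t' \<in> {0..1}" "b t = b t'"
    then have "m * t = m * t'"
      unfolding b_def using q_eq_iff[of "(y, m * t)" "(y, m * t')"] assms by (auto simp: mult_le_one)
    then show "t = t'" using \<open>0 < m\<close> by simp
  qed
  moreover have b_top: "b ` {0..1} \<subseteq> topspace Ctop"
    using \<open>continuous_map (top_of_set {0..1}) Ctop b\<close> continuous_map_image_subset_topspace by fastforce
  ultimately have "homeomorphic_map (top_of_set {0..1}) (subtopology Ctop (b ` {0..1})) b"
    using Hausdorff_Ctop
    by (intro continuous_imp_homeomorphic_map)
       (auto simp: continuous_map_in_subtopology Hausdorff_space_subtopology compact_space_subtopology)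
  moreover have "b 0 = v" "b 1 = q (y, m)" unfolding b_def using v_eq[OF assms(1)] by auto
  ultimately show ?thesis unfolding arc_in_def using b_top image_b by auto
qed

lemma path_locally_in_spoke:
  assumes h: "continuous_map (top_of_set {0..1::real}) Ctop h" and t0: "t0 \<in> {0<..<1}"
    and y: "y \<in> topspace Y" and m: "m \<in> {0<..1}" and h_t0: "h t0 = q (y, m)"
  obtains d where "0 < d" "{t0 - d..t0 + d} \<subseteq> {0..1}"
    "\<And>t. t \<in> {t0 - d..t0 + d} \<Longrightarrow> h t = q (y, height (h t)) \<and> height (h t) \<in> {0<..1}"
proof -
  have "h t0 \<in> topspace Ctop - {v}"
    using h_t0 q_image q_eq_v_iff[OF y, of m] y m by auto
  then obtain d where d: "0 < d" and I: "{t0 - d..t0 + d} \<subseteq> {0..1}"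
    and "h ` {t0 - d..t0 + d} \<subseteq> topspace Ctop - {v}"
    using continuous_map_interval_neighbourhood[OF h openin_punctured t0] by blast
  let ?I = "{t0 - d..t0 + d}"
  have "connectedin Ctop (h ` ?I)"
    using connectedin_continuous_map_image[OF continuous_map_from_subtopology_mono[OF h I]]
    by (simp add: connectedin_subtopology)
  moreover have "v \<notin> h ` ?I" using \<open>h ` ?I \<subseteq> topspace Ctop - {v}\<close> by blast
  ultimately obtain y1 where y1: "y1 \<in> topspace Y" "h ` ?I \<subseteq> q ` ({y1} \<times> {0<..1})"
    using connectedin_punctured_in_spoke by blast
  have rep: "\<exists>s\<in>{0<..1}. h t = q (y1, s)" if "t \<in> ?I" for t
  proof -
    have "h t \<in> q ` ({y1} \<times> {0<..1})" using y1(2) that by blast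
    then show ?thesis by auto
  qed
  obtain s0 where "s0 \<in> {0<..1}" "h t0 = q (y1, s0)" using rep[of t0] \<open>0 < d\<close> by auto
  then have "y1 = y" using q_eq_positive_iff[OF y y1(1) m] h_t0 by auto
  show ?thesis
  proof (rule that[OF d I])
    fix t assume "t \<in> ?I"
    then obtain s where "s \<in> {0<..1}" "h t = q (y, s)" using rep \<open>y1 = y\<close> by blast
    then show "h t = q (y, height (h t)) \<and> height (h t) \<in> {0<..1}" using y by simp
  qed
qed

lemma end_point_of_spoke_max:
  assumes y: "y \<in> topspace Y" and m: "m \<in> {0<..1}" and "q (y, m) \<in> J"
    and max: "\<And>s. s \<in> {0..1} \<Longrightarrow> q (y, s) \<in> J \<Longrightarrow> s \<le> m"
  shows "end_point_of Ctop J (q (y, m))"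
  unfolding end_point_of_def
proof (intro conjI allI impI)
  show "q (y, m) \<in> J" by fact
  fix A a b assume A: "A \<subseteq> J \<and> arc_in Ctop A a b \<and> q (y, m) \<in> A"
  then have "arc_in Ctop A a b" by blast
  then obtain h where h: "continuous_map (top_of_set {0..1::real}) Ctop h" "inj_on h {0..1}"
    "h ` {0..1} = A" "h 0 = a" "h 1 = b"
    by (rule arc_inE)
  have "q (y, m) \<in> h ` {0..1}" using A h(3) by simp
  then obtain t0 where t0: "t0 \<in> {0..1}" "h t0 = q (y, m)" by (metis imageE)
  show "q (y, m) = a \<or> q (y, m) = b"
  proof (rule ccontr)
    assume "\<not> ?thesis"
    then have "t0 \<noteq> 0" "t0 \<noteq> 1" using t0(2) h(4,5) by auto
    then have "t0 \<in> {0<..<1}" using t0(1) by auto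
    then obtain d where d: "0 < d" "{t0 - d..t0 + d} \<subseteq> {0..1}"
      and rep: "\<And>t. t \<in> {t0 - d..t0 + d} \<Longrightarrow> h t = q (y, height (h t)) \<and> height (h t) \<in> {0<..1}"
      using path_locally_in_spoke[OF h(1) _ y m t0(2)] by blast
    let ?I = "{t0 - d..t0 + d}"
    have "continuous_on {0..1} (height \<circ> h)"
      using continuous_map_compose[OF h(1) continuous_height] by simp
    then have "continuous_on ?I (height \<circ> h)" using continuous_on_subset d(2) by blast
    moreover have "inj_on (height \<circ> h) ?I"
    proof (rule inj_onI)
      fix t t' assume "t \<in> ?I" "t' \<in> ?I" "(height \<circ> h) t = (height \<circ> h) t'"
      then have "h t = h t'" using rep by (metis comp_apply)
      then show "t = t'" using h(2) d(2) \<open>t \<in> ?I\<close> \<open>t' \<in> ?I\<close> by (meson inj_onD subsetD)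
    qed
    moreover have "height (h t0) = m" using t0(2) y m by simp
    ultimately have "\<exists>t\<in>?I. m < height (h t)"
      using continuous_inj_on_interior_not_max[of "t0 - d" "t0 + d" "height \<circ> h" t0] d(1) by auto
    then obtain t where t: "t \<in> ?I" "m < height (h t)" by blast
    have "h t \<in> J" using t(1) d(2) h(3) A by blast
    then have "q (y, height (h t)) \<in> J" using rep[OF t(1)] by simp
    moreover have "height (h t) \<in> {0..1}" using rep[OF t(1)] by simp
    ultimately show False using max t(2) by force
  qed
qed

lemma retraction_lift_in_spoke:
  assumes R: "continuous_map (subtopology F (fence F q v J)) F R"
    and lift: "\<And>x. x \<in> fence F q v J \<Longrightarrow> q (R x) = r (q x)"
    and S: "connectedin Ctop S" "S \<subseteq> J - {v}"
  shows "\<exists>y\<in>topspace Y. r ` S \<subseteq> q ` ({y} \<times> {0..1})"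
proof -
  obtain y0 where y0: "y0 \<in> topspace Y" "S \<subseteq> q ` ({y0} \<times> {0<..1})"
    using connectedin_punctured_in_spoke S by blast
  define lift_c where "lift_c c = (y0, height c)" for c
  have "continuous_map Ctop F lift_c"
    unfolding lift_c_def using y0(1) height_in_unit continuous_height
    by (auto intro!: continuous_map_pairedI simp: continuous_map_in_subtopology)
  have q_lift_c: "q (lift_c c) = c" "lift_c c \<in> topspace F" if "c \<in> S" for c
  proof -
    obtain s where "s \<in> {0<..1}" "c = q (y0, s)" using y0(2) \<open>c \<in> S\<close> by blast
    then show "q (lift_c c) = c" "lift_c c \<in> topspace F" unfolding lift_c_def using y0(1) by auto
  qed
  have "lift_c ` S \<subseteq> fence F q v J"
    using q_lift_c S(2) subset_fence[of F q J v] by force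
  then have "connectedin (subtopology F (fence F q v J)) (lift_c ` S)"
    using connectedin_continuous_map_image[OF \<open>continuous_map Ctop F lift_c\<close> S(1)]
    by (simp add: connectedin_subtopology)
  then have "connectedin F (R ` lift_c ` S)"
    by (rule connectedin_continuous_map_image[OF R])
  then obtain y where "y \<in> topspace Y" "R ` lift_c ` S \<subseteq> {y} \<times> {0..1}"
    using connectedin_F_in_fibre by blast
  moreover have "r c = q (R (lift_c c))" if "c \<in> S" for c
    using lift[of "lift_c c"] q_lift_c[OF that] \<open>lift_c ` S \<subseteq> fence F q v J\<close> that by auto
  ultimately show ?thesis by blast
qed

lemma continuum_Int_spoke_in_leg:
  assumes J: "connectedin Ctop J" "closedin Ctop J" "v \<in> J" and y: "y \<in> topspace Y"
  shows "J \<inter> q ` ({y} \<times> {0..1}) \<subseteq> {v} \<or> (\<exists>B\<in>legs Ctop v J. J \<inter> q ` ({y} \<times> {0..1}) \<subseteq> B)"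
proof -
  obtain m where m: "m \<in> {0..1}" "q (y, m) \<in> J"
    and max: "\<And>s. s \<in> {0..1} \<Longrightarrow> q (y, s) \<in> J \<Longrightarrow> s \<le> m"
    using spoke_height_max[OF J(2,3) y] by blast
  have sub: "J \<inter> q ` ({y} \<times> {0..1}) \<subseteq> q ` ({y} \<times> {0..m})"
    using max by force
  show ?thesis
  proof (cases "m = 0")
    case True
    then show ?thesis using sub v_eq[OF y] by auto
  next
    case False
    then have "m \<in> {0<..1}" using m(1) by auto
    have "q ` ({y} \<times> {0..m}) \<subseteq> J"
      using segment_in_continuum[OF J y] m by auto
    moreover have "q (y, m) \<noteq> v" using q_eq_v_iff[OF y] m(1) False by auto
    ultimately have "q ` ({y} \<times> {0..m}) \<in> legs Ctop v J"
      unfolding legs_def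
      using arc_in_spoke_segment[OF y] end_point_of_spoke_max[OF y _ m(2) max] \<open>m \<in> {0<..1}\<close>
      by auto
    then show ?thesis using sub by blast
  qed
qed

theorem semi_simple_if_fence_lift:
  assumes J: "subcontinuum Ctop J" and r: "retraction_onto Ctop J K r" and "v \<in> K"
    and R: "continuous_map (subtopology F (fence F q v J)) F R"
    and lift: "\<And>x. x \<in> fence F q v J \<Longrightarrow> q (R x) = r (q x)"
  shows "semi_simple Ctop v J r"
  unfolding semi_simple_def
proof
  fix A assume "A \<in> legs Ctop v J"
  then obtain e where A: "A \<subseteq> J" "arc_in Ctop A v e" unfolding legs_def by blast
  have J_closed: "closedin Ctop J"
    using J Hausdorff_Ctop compactin_imp_closedin unfolding subcontinuum_def by blast
  have J_conn: "connectedin Ctop J" using J unfolding subcontinuum_def by blast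
  have "K \<subseteq> J" using r unfolding retraction_onto_def by blast
  have rJ: "r ` J \<subseteq> J"
    using retraction_onto_image_subset[OF r] closedin_subset[OF J_closed] \<open>K \<subseteq> J\<close> by blast
  have rv: "r v = v" using retraction_onto_fixes[OF r v_in_topspace \<open>v \<in> K\<close>] .
  obtain y where y: "y \<in> topspace Y" "r ` (A - {v}) \<subseteq> q ` ({y} \<times> {0..1})"
    using retraction_lift_in_spoke[OF R lift connectedin_arc_minus_start[OF A(2)]] A(1) by blast
  have "r v \<in> q ` ({y} \<times> {0..1})" using rv v_eq[OF y(1)] by auto
  with y(2) have "r ` A \<subseteq> q ` ({y} \<times> {0..1})" by blast
  with rJ A(1) have "r ` A \<subseteq> J \<inter> q ` ({y} \<times> {0..1})" by blast
  moreover have "v \<in> A" "v \<in> J" using arc_in_start_mem[OF A(2)] A(1) by blast+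
  ultimately show "\<exists>B\<in>legs Ctop v J. r ` A \<subseteq> B"
    using continuum_Int_spoke_in_leg[OF J_conn J_closed _ y(1)] \<open>A \<in> legs Ctop v J\<close> by blast
qed

end

theorem mainTheorem14:
  fixes Y :: "'a topology" and Ctop :: "'c topology"
    and q :: "'a \<times> real \<Rightarrow> 'c" and v :: 'c
    and J K :: "'c set" and r :: "'c \<Rightarrow> 'c"
    and R :: "'a \<times> real \<Rightarrow> 'a \<times> real"
  defines "F \<equiv> prod_topology Y (top_of_set {0..1::real})"
  assumes Y_cantor: "Y homeomorphic_space top_of_set cantor_ternary"
    and q_quot: "quotient_map F Ctop q"
    and q_ident: "\<forall>x\<in>topspace F. \<forall>y\<in>topspace F.
                    q x = q y \<longleftrightarrow> (x = y \<or> (snd x = 0 \<and> snd y = 0))"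
    and v_top: "\<forall>y\<in>topspace Y. v = q (y, 0)"
    and J_cont: "subcontinuum Ctop J" and K_cont: "subcontinuum Ctop K"
    and vK: "v \<in> K" and KJ: "K \<subseteq> J"
    and r_retr: "retraction_onto Ctop J K r"
    and R_retr: "retraction_onto F (fence F q v J) (fence F q v K) R"
    and R_lift: "\<forall>x\<in>fence F q v J. q (R x) = r (q x)"
  shows "semi_simple Ctop v J r"
proof -
  interpret zero_dimensional_fan Y Ctop q v
  proof
    show "Hausdorff_space Y"
      using homeomorphic_Hausdorff_space[OF Y_cantor] by (simp add: Hausdorff_space_subtopology)
    show "Y dim_le 0"
      using homeomorphic_space_dimension_le[OF Y_cantor] dimension_le_0_empty_interior[OF interior_cantor_ternary]
      by simp
    have "top_of_set cantor_ternary \<noteq> trivial_topology"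
      using zero_in_cantor_ternary
      by (metis empty_iff null_topspace_iff_trivial topspace_euclidean_subtopology)
    then show "topspace Y \<noteq> {}"
      using homeomorphic_empty_space[OF Y_cantor] by simp
    show "quotient_map (prod_topology Y (top_of_set {0..1})) Ctop q"
      using q_quot unfolding F_def .
    show "q x = q x' \<longleftrightarrow> x = x' \<or> snd x = 0 \<and> snd x' = 0"
      if "x \<in> topspace Y \<times> {0..1}" "x' \<in> topspace Y \<times> {0..1}" for x x'
      using q_ident that unfolding F_def topspace_prod_topology topspace_euclidean_subtopology by blast
  qed (use v_top in simp)
  have "continuous_map (subtopology F (fence F q v J)) F R"
    using R_retr continuous_map_into_fulltopology unfolding retraction_onto_def by blast
  then show ?thesis
    using semi_simple_if_fence_lift[OF J_cont r_retr vK] R_lift unfolding F_def by blast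
qed

end
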